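(* Let $a=\sum_{t=0}^7a_te_t\in C\ell_{1,2}$ be nonzero with $P(a)=0$, let $K=a_0^2+a_2^2+a_4^2+a_6^2$ and $x=\frac{a'}{4K}$. Then $axa=a$, $xax=x$, $(ax)'=ax$ and $(xa)'=xa$.
   Context: $C\ell_{1,2}$ is the real Clifford algebra generated by $i_1,i_2,i_3$ with $i_1^2=1$, $i_2^2=i_3^2=-1$ and $i_ti_m=-i_mi_t$ for $t\neq m$, with real basis $e_0=1$, $e_1=i_1$, $e_2=i_2$, $e_3=i_1i_2$, $e_4=i_3$, $e_5=i_1i_3$, $e_6=i_2i_3$, $e_7=i_1i_2i_3$. For $a=\sum a_te_t$: the prime is $a'=a_0+a_1e_1-a_2e_2+a_3e_3-a_4e_4+a_5e_5-a_6e_6-a_7e_7$; $N(a)=a_0^2-a_1^2+a_2^2-a_3^2+a_4^2-a_5^2+a_6^2-a_7^2$, $T(a)=a_0a_7+a_2a_5-a_1a_6-a_3a_4$, $P(a)=N(a)^2+4T(a)^2$. *)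

theory Defs
  imports Main "HOL.Real"
begin

text \<open>Elements of the real Clifford algebra Cl(1,2), written in the basis
  e0=1, e1=i1, e2=i2, e3=i1 i2, e4=i3, e5=i1 i3, e6=i2 i3, e7=i1 i2 i3,
  with i1^2 = 1, i2^2 = i3^2 = -1 and anticommuting generators.\<close>

datatype cl12 = CL (c0: real) (c1: real) (c2: real) (c3: real)
                   (c4: real) (c5: real) (c6: real) (c7: real)

definition cl_zero :: cl12 where
  "cl_zero = CL 0 0 0 0 0 0 0 0"

definition cl_scale :: "real \<Rightarrow> cl12 \<Rightarrow> cl12" where
  "cl_scale r a = CL (r * c0 a) (r * c1 a) (r * c2 a) (r * c3 a)
                     (r * c4 a) (r * c5 a) (r * c6 a) (r * c7 a)"

text \<open>Clifford product, obtained by bilinear extension of the products of basis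
  blades (e_A e_B = sign * e_(A xor B), basis indices read as bitmasks over i1,i2,i3).\<close>
fun cl_mult :: "cl12 \<Rightarrow> cl12 \<Rightarrow> cl12" (infixl "\<odot>" 70) where
  "cl_mult (CL a0 a1 a2 a3 a4 a5 a6 a7) (CL b0 b1 b2 b3 b4 b5 b6 b7) =
    CL
( a0 * b0 + a1 * b1 - a2 * b2 + a3 * b3 - a4 * b4 + a5 * b5 - a6 * b6 - a7 * b7)
     ( a0 * b1 + a1 * b0 + a2 * b3 - a3 * b2 + a4 * b5 - a5 * b4 - a6 * b7 - a7 * b6)
     ( a0 * b2 + a1 * b3 + a2 * b0 - a3 * b1 + a4 * b6 - a5 * b7 - a6 * b4 - a7 * b5)
     ( a0 * b3 + a1 * b2 - a2 * b1 + a3 * b0 - a4 * b7 + a5 * b6 - a6 * b5 - a7 * b4)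
     ( a0 * b4 + a1 * b5 - a2 * b6 + a3 * b7 + a4 * b0 - a5 * b1 + a6 * b2 + a7 * b3)
     ( a0 * b5 + a1 * b4 + a2 * b7 - a3 * b6 - a4 * b1 + a5 * b0 + a6 * b3 + a7 * b2)
     ( a0 * b6 + a1 * b7 + a2 * b4 - a3 * b5 - a4 * b2 + a5 * b3 + a6 * b0 + a7 * b1)
     ( a0 * b7 + a1 * b6 - a2 * b5 + a3 * b4 + a4 * b3 - a5 * b2 + a6 * b1 + a7 * b0)"

definition cl_prime :: "cl12 \<Rightarrow> cl12" where
  "cl_prime a = CL (c0 a) (c1 a) (- c2 a) (c3 a) (- c4 a) (c5 a) (- c6 a) (- c7 a)"

definition cl_N :: "cl12 \<Rightarrow> real" where
  "cl_N a = (c0 a)^2 - (c1 a)^2 + (c2 a)^2 - (c3 a)^2 + (c4 a)^2 - (c5 a)^2 + (c6 a)^2 - (c7 a)^2"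

definition cl_T :: "cl12 \<Rightarrow> real" where
  "cl_T a = c0 a * c7 a + c2 a * c5 a - c1 a * c6 a - c3 a * c4 a"

definition cl_P :: "cl12 \<Rightarrow> real" where
  "cl_P a = (cl_N a)^2 + 4 * (cl_T a)^2"

end

theory Submission
  imports Defs
begin

text \<open>The prime is an anti-involution of Cl(1,2), so a a' and a' a are fixed by it.
  Everything then rests on the cubic identity a a' a = 4 K a for a with
  N(a) = T(a) = 0.  Under the isomorphism of Cl(1,2) with the complex 2 x 2 matrices, in which
  the prime becomes the conjugate transpose and P(a) = |det A|^2, this is the identity
  A A* A = tr(A A*) A for a singular matrix A: x is the Moore-Penrose inverse of a.\<close>

lemma cl_P_eq_0_iff: "cl_P a = 0 \<longleftrightarrow> cl_N a = 0 \<and> cl_T a = 0"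
  unfolding cl_P_def by (smt (verit) zero_le_power2 power2_eq_square mult_eq_0_iff)

lemma cl_prime_prime [simp]: "cl_prime (cl_prime a) = a"
  by (cases a) (simp add: cl_prime_def)

lemma cl_prime_mult: "cl_prime (a \<odot> b) = cl_prime b \<odot> cl_prime a"
  by (cases a, cases b) (simp add: cl_prime_def algebra_simps)

lemma cl_prime_scale: "cl_prime (cl_scale r a) = cl_scale r (cl_prime a)"
  by (simp add: cl_prime_def cl_scale_def)

lemma cl_scale_mult: "cl_scale r a \<odot> b = cl_scale r (a \<odot> b)"
  by (cases a, cases b) (simp add: cl_scale_def algebra_simps)

lemma cl_mult_scale: "a \<odot> cl_scale r b = cl_scale r (a \<odot> b)"
  by (cases a, cases b) (simp add: cl_scale_def algebra_simps)

lemma cl_scale_scale: "cl_scale r (cl_scale s a) = cl_scale (r * s) a"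
  by (simp add: cl_scale_def)

lemma cl_scale_one [simp]: "cl_scale 1 a = a"
  by (cases a) (simp add: cl_scale_def)

lemma cl_N_prime [simp]: "cl_N (cl_prime a) = cl_N a"
  by (simp add: cl_N_def cl_prime_def)

lemma cl_T_prime [simp]: "cl_T (cl_prime a) = - cl_T a"
  by (simp add: cl_T_def cl_prime_def algebra_simps)

lemma sum_four_squares_eq_0_iff:
  "(w::real)^2 + x^2 + y^2 + z^2 = 0 \<longleftrightarrow> w = 0 \<and> x = 0 \<and> y = 0 \<and> z = 0"
  by (smt (verit) zero_le_power2 power2_eq_square mult_eq_0_iff)

lemma cl_even_squares_pos:
  assumes "a \<noteq> cl_zero" and "cl_N a = 0"
  shows "(c0 a)^2 + (c2 a)^2 + (c4 a)^2 + (c6 a)^2 > 0"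
proof (rule ccontr)
  assume "\<not> ?thesis"
  then have "(c0 a)^2 + (c2 a)^2 + (c4 a)^2 + (c6 a)^2 = 0"
    by (smt (verit) zero_le_power2)
  then have even: "c0 a = 0 \<and> c2 a = 0 \<and> c4 a = 0 \<and> c6 a = 0"
    by (simp only: sum_four_squares_eq_0_iff)
  with \<open>cl_N a = 0\<close> have "(c1 a)^2 + (c3 a)^2 + (c5 a)^2 + (c7 a)^2 = 0"
    by (simp add: cl_N_def)
  then have "c1 a = 0 \<and> c3 a = 0 \<and> c5 a = 0 \<and> c7 a = 0"
    by (simp only: sum_four_squares_eq_0_iff)
  with even \<open>a \<noteq> cl_zero\<close> show False
    by (cases a) (simp add: cl_zero_def)
qed

text \<open>In general a a' a = 2 S a - (N + 2 T e7) b, where S is the sum of the squared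
  coordinates of a and b is a with the coordinates of the blades containing i1 negated;
  moreover S = 2 K - N.\<close>

lemma cl_mult_prime_mult_singular:
  assumes "cl_N a = 0" and "cl_T a = 0"
  shows "a \<odot> cl_prime a \<odot> a = cl_scale (4 * ((c0 a)^2 + (c2 a)^2 + (c4 a)^2 + (c6 a)^2)) a"
proof (cases a)
  case (CL a0 a1 a2 a3 a4 a5 a6 a7)
  have N: "a0^2 - a1^2 + a2^2 - a3^2 + a4^2 - a5^2 + a6^2 - a7^2 = 0"
    and T: "a0 * a7 + a2 * a5 - a1 * a6 - a3 * a4 = 0"
    using assms by (simp_all add: CL cl_N_def cl_T_def)
  show ?thesis
    unfolding CL by (simp add: cl_prime_def cl_scale_def) (intro conjI; use N T in algebra)
qed

theorem lemma3p4:
  fixes a :: cl12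
  assumes "a \<noteq> cl_zero"
    and "cl_P a = 0"
  defines "K \<equiv> (c0 a)^2 + (c2 a)^2 + (c4 a)^2 + (c6 a)^2"
  defines "x \<equiv> cl_scale (1 / (4 * K)) (cl_prime a)"
  shows "a \<odot> x \<odot> a = a \<and> x \<odot> a \<odot> x = x \<and>
         cl_prime (a \<odot> x) = a \<odot> x \<and> cl_prime (x \<odot> a) = x \<odot> a"
proof -
  have N: "cl_N a = 0" and T: "cl_T a = 0"
    using assms(2) by (simp_all add: cl_P_eq_0_iff)
  have "K > 0"
    unfolding K_def using assms(1) N by (rule cl_even_squares_pos)
  have "a \<odot> cl_prime a \<odot> a = cl_scale (4 * K) a"
    unfolding K_def using N T by (rule cl_mult_prime_mult_singular)
  moreover have "cl_prime a \<odot> a \<odot> cl_prime a = cl_scale (4 * K) (cl_prime a)"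
  proof -
    have "(c0 (cl_prime a))^2 + (c2 (cl_prime a))^2 + (c4 (cl_prime a))^2 + (c6 (cl_prime a))^2 = K"
      by (simp add: K_def cl_prime_def)
    with cl_mult_prime_mult_singular[of "cl_prime a"] N T show ?thesis
      by simp
  qed
  ultimately show ?thesis
    unfolding x_def using \<open>K > 0\<close>
    by (simp add: cl_scale_mult cl_mult_scale cl_scale_scale cl_prime_scale
        cl_prime_mult)
qed

end
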